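(* Let $\mathcal G=(E,\mathcal I)$ be a matroid, $c:E\to\mathbb R_{\ge0}$, $U\subseteq E$, $q\in\mathbb N$, and let $B$ be a minimum basis of $[\mathcal G\cap U]_{\le q}$ with respect to $c$. Let $\Delta\in\mathcal I$ with $|\Delta|\le q$, and let $a\in(\Delta\cap U)\setminus B$. Then there is $b\in B\setminus\Delta$ such that $\Delta-a+b\in\mathcal I$ and $c(b)\le c(a)$.
   Context: For a matroid $\mathcal G=(E,\mathcal I)$, $U\subseteq E$ and $q\in\mathbb N$, $[\mathcal G\cap U]_{\le q}$ denotes the matroid with ground set $U$ and independent sets $\{A\in\mathcal I: A\subseteq U,\ |A|\le q\}$. A basis is a maximal independent set; a minimum basis w.r.t. $c$ is a basis $B$ with $\sum_{e\in B}c(e)\le\sum_{e\in B'}c(e)$ for every basis $B'$. $A+e=A\cup\{e\}$, $A-e=A\setminus\{e\}$. *)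

theory Defs
  imports Complex_Main
begin

definition matroid :: "'a set \<Rightarrow> 'a set set \<Rightarrow> bool" where
  "matroid E I \<longleftrightarrow> finite E \<and> (\<forall>A\<in>I. A \<subseteq> E) \<and> {} \<in> I
     \<and> (\<forall>A B. B \<in> I \<longrightarrow> A \<subseteq> B \<longrightarrow> A \<in> I)
     \<and> (\<forall>A B. A \<in> I \<longrightarrow> B \<in> I \<longrightarrow> card A < card B \<longrightarrow> (\<exists>e\<in>B - A. insert e A \<in> I))"

definition restr_trunc :: "'a set set \<Rightarrow> 'a set \<Rightarrow> nat \<Rightarrow> 'a set set" where
  "restr_trunc I U q = {A \<in> I. A \<subseteq> U \<and> card A \<le> q}"

definition basis :: "'a set set \<Rightarrow> 'a set \<Rightarrow> bool" where
  "basis I B \<longleftrightarrow> B \<in> I \<and> (\<forall>A\<in>I. B \<subseteq> A \<longrightarrow> A = B)"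

definition min_basis :: "'a set set \<Rightarrow> ('a \<Rightarrow> real) \<Rightarrow> 'a set \<Rightarrow> bool" where
  "min_basis I c B \<longleftrightarrow> basis I B \<and> (\<forall>B'. basis I B' \<longrightarrow> (\<Sum>e\<in>B. c e) \<le> (\<Sum>e\<in>B'. c e))"

end

theory Submission
  imports Defs
begin

text \<open>
  Write \<open>M\<close> for the truncated restriction, itself a matroid. It suffices to find \<open>b \<in> B - \<Delta>\<close> such that both
  \<open>\<Delta> - a + b\<close> and \<open>B - b + a\<close> are independent: then \<open>B - b + a\<close> is an independent set of \<open>M\<close> as
  large as \<open>B\<close>, hence a basis of \<open>M\<close>, and minimality of \<open>B\<close> gives \<open>c b \<le> c a\<close>.
  If \<open>B + a\<close> is independent, then \<open>|B| = q\<close> and \<open>b\<close> comes from augmenting \<open>\<Delta> - a\<close> by \<open>B\<close>.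
  Otherwise \<open>a\<close> closes a circuit \<open>K + a\<close> with \<open>K \<subseteq> B\<close>; every \<open>b \<in> K\<close> satisfies the second
  condition, and if no \<open>b \<in> K\<close> satisfied the first, \<open>\<Delta> - a\<close> would be a maximal independent
  subset of \<open>K \<union> (\<Delta> - a)\<close> while a larger one, containing \<open>K\<close>, exists.
\<close>

definition max_indep_subset :: "'a set set \<Rightarrow> 'a set \<Rightarrow> 'a set \<Rightarrow> bool" where
  "max_indep_subset I S Z \<longleftrightarrow> Z \<in> I \<and> Z \<subseteq> S \<and> (\<forall>e\<in>S - Z. insert e Z \<notin> I)"

lemma max_indep_subset_exists:
  assumes "X \<in> I" "X \<subseteq> S" "finite S"
  obtains Z where "X \<subseteq> Z" "max_indep_subset I S Z"
proof -
  let ?F = "{Z \<in> I. Z \<subseteq> S}"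
  have "finite ?F"
    using \<open>finite S\<close> by (rule finite_subset[rotated, OF finite_Pow_iff[THEN iffD2]]) auto
  moreover have "X \<in> ?F"
    using assms(1,2) by simp
  ultimately obtain Z where Z: "Z \<in> ?F" "X \<subseteq> Z" and maximal: "\<forall>Y\<in>?F. Z \<subseteq> Y \<longrightarrow> Z = Y"
    by (meson finite_has_maximal2)
  have "insert e Z \<notin> I" if "e \<in> S - Z" for e
    using maximal[rule_format, of "insert e Z"] Z(1) that by auto
  then have "max_indep_subset I S Z"
    using Z(1) unfolding max_indep_subset_def by simp
  with Z(2) show thesis by (rule that)
qed

lemma card_insert_remove:
  assumes "finite B" "b \<in> B" "a \<notin> B"
  shows "card (insert a (B - {b})) = card B"
  using assms card.remove[of B b] by auto

context
  fixes E :: "'a set" and I :: "'a set set"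
  assumes matroid: "matroid E I"
begin

lemma indep_finite: "A \<in> I \<Longrightarrow> finite A"
  using matroid unfolding matroid_def by (meson finite_subset)

lemma indep_subset: "A \<in> I \<Longrightarrow> X \<subseteq> A \<Longrightarrow> X \<in> I"
  using matroid unfolding matroid_def by blast

lemma indep_augment: "A \<in> I \<Longrightarrow> B \<in> I \<Longrightarrow> card A < card B \<Longrightarrow> \<exists>e\<in>B - A. insert e A \<in> I"
  using matroid unfolding matroid_def by blast

lemma max_indep_subset_card_ge:
  assumes "max_indep_subset I S Z" "A \<in> I" "A \<subseteq> S"
  shows "card A \<le> card Z"
proof (rule ccontr)
  assume "\<not> card A \<le> card Z"
  then have "card Z < card A" by simp
  then obtain e where "e \<in> A - Z" "insert e Z \<in> I"
    using indep_augment[of Z A] assms(1,2) unfolding max_indep_subset_def by blast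
  then show False using assms unfolding max_indep_subset_def by blast
qed

lemma basis_card_ge:
  assumes "basis I B" "A \<in> I"
  shows "card A \<le> card B"
proof (rule ccontr)
  assume "\<not> card A \<le> card B"
  then have "card B < card A" by simp
  then obtain e where "e \<in> A - B" "insert e B \<in> I"
    using indep_augment[of B A] assms by (auto simp: basis_def)
  then show False using assms(1) unfolding basis_def by auto
qed

lemma basis_if_card_ge:
  assumes "basis I B" "A \<in> I" "card B \<le> card A"
  shows "basis I A"
  unfolding basis_def
proof (intro conjI ballI impI \<open>A \<in> I\<close>)
  fix A' assume "A' \<in> I" "A \<subseteq> A'"
  moreover have "card A' \<le> card A"
    using basis_card_ge[OF \<open>basis I B\<close> \<open>A' \<in> I\<close>] \<open>card B \<le> card A\<close> by simp
  ultimately show "A' = A"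
    using card_seteq[OF indep_finite] by metis
qed

lemma matroid_restr_trunc:
  assumes "U \<subseteq> E"
  shows "matroid U (restr_trunc I U q)"
  unfolding matroid_def
proof (intro conjI allI impI ballI)
  show "finite U"
    using matroid finite_subset[OF assms] by (simp add: matroid_def)
  show "{} \<in> restr_trunc I U q"
    using matroid by (simp add: matroid_def restr_trunc_def)
  show "A \<subseteq> U" if "A \<in> restr_trunc I U q" for A
    using that by (simp add: restr_trunc_def)
next
  fix X A assume "A \<in> restr_trunc I U q" "X \<subseteq> A"
  then show "X \<in> restr_trunc I U q"
    using indep_subset[of A X] indep_finite[of A] card_mono[of A X]
    unfolding restr_trunc_def by auto
next
  fix A B assume A: "A \<in> restr_trunc I U q" and B: "B \<in> restr_trunc I U q"
    and less: "card A < card B"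
  obtain e where e: "e \<in> B - A" "insert e A \<in> I"
    using indep_augment[of A B] A B less unfolding restr_trunc_def by auto
  have "card (insert e A) \<le> card B"
    using less indep_finite[of A] A unfolding restr_trunc_def by (simp add: card_insert_if)
  then show "\<exists>e\<in>B - A. insert e A \<in> restr_trunc I U q"
    using e A B unfolding restr_trunc_def by auto
qed

lemma circuit_exchange:
  assumes "B \<in> I" "K \<subseteq> B" "b \<in> K"
    and dependent: "insert a K \<notin> I" and "insert a (K - {b}) \<in> I"
  shows "insert a (B - {b}) \<in> I"
proof -
  have "a \<notin> B"
  proof
    assume "a \<in> B"
    then have "insert a K \<subseteq> B" using assms(2) by blast
    then show False using indep_subset[OF \<open>B \<in> I\<close>] dependent by blast
  qed
  have fin: "finite (insert a B)"
    using indep_finite[OF \<open>B \<in> I\<close>] by simp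
  have "insert a (K - {b}) \<subseteq> insert a B"
    using assms(2) by blast
  then obtain Z where Z: "insert a (K - {b}) \<subseteq> Z" "max_indep_subset I (insert a B) Z"
    using max_indep_subset_exists[OF \<open>insert a (K - {b}) \<in> I\<close> _ fin] by blast
  have "b \<notin> Z"
  proof
    assume "b \<in> Z"
    then have "insert a K \<subseteq> Z" using Z(1) \<open>b \<in> K\<close> by blast
    then show False
      using indep_subset Z(2) dependent unfolding max_indep_subset_def by blast
  qed
  then have sub: "Z \<subseteq> insert a (B - {b})"
    using Z(2) unfolding max_indep_subset_def by blast
  have "card (insert a (B - {b})) = card B"
    using assms(2,3) by (intro card_insert_remove indep_finite \<open>B \<in> I\<close> \<open>a \<notin> B\<close>) blast+
  also have "\<dots> \<le> card Z"
    using max_indep_subset_card_ge[OF Z(2) \<open>B \<in> I\<close>] by blast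
  finally have "insert a (B - {b}) = Z"
    using card_seteq[OF _ sub] fin by simp
  then show ?thesis
    using Z(2) unfolding max_indep_subset_def by simp
qed

lemma fundamental_circuit:
  assumes "B \<in> I" "insert a B \<notin> I"
  obtains K where "K \<subseteq> B" "insert a K \<notin> I" "\<forall>b\<in>K. insert a (B - {b}) \<in> I"
proof -
  let ?F = "{K. K \<subseteq> B \<and> insert a K \<notin> I}"
  have "finite ?F"
    using indep_finite[OF \<open>B \<in> I\<close>] by (rule finite_subset[rotated, OF finite_Pow_iff[THEN iffD2]]) auto
  moreover have "B \<in> ?F"
    using assms(2) by simp
  ultimately obtain K where K: "K \<in> ?F" and minimal: "\<forall>K'\<in>?F. K' \<subseteq> K \<longrightarrow> K = K'"
    by (meson finite_has_minimal2)
  have "insert a (K - {b}) \<in> I" if "b \<in> K" for b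
    using minimal[rule_format, of "K - {b}"] K that by auto
  then have "\<forall>b\<in>K. insert a (B - {b}) \<in> I"
    using circuit_exchange[OF \<open>B \<in> I\<close>] K by blast
  with K show thesis
    using that by blast
qed

lemma augment_by_dependent_insert:
  assumes "K \<in> I" "insert a K \<notin> I" "insert a D \<in> I" "a \<notin> D"
  shows "\<exists>b\<in>K - D. insert b D \<in> I"
proof (rule ccontr)
  assume no_augment: "\<not> ?thesis"
  have "D \<in> I"
    using indep_subset[OF \<open>insert a D \<in> I\<close>] by blast
  have D_max: "max_indep_subset I (K \<union> D) D"
    unfolding max_indep_subset_def
  proof (intro conjI ballI)
    fix e assume "e \<in> K \<union> D - D"
    then have "e \<in> K - D"
      by blast
    with no_augment show "insert e D \<notin> I"
      by auto
  qed (use \<open>D \<in> I\<close> in auto)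
  have "finite (K \<union> D)"
    using indep_finite \<open>K \<in> I\<close> \<open>D \<in> I\<close> by blast
  then obtain Z where Z: "K \<subseteq> Z" "max_indep_subset I (K \<union> D) Z"
    by (rule max_indep_subset_exists[OF \<open>K \<in> I\<close> Un_upper1])
  have "insert a Z \<notin> I"
  proof
    assume "insert a Z \<in> I"
    moreover have "insert a K \<subseteq> insert a Z"
      using Z(1) by blast
    ultimately show False
      using indep_subset \<open>insert a K \<notin> I\<close> by blast
  qed
  with Z(2) have "max_indep_subset I (insert a (K \<union> D)) Z"
    by (auto simp: max_indep_subset_def)
  then have "card (insert a D) \<le> card Z"
    by (rule max_indep_subset_card_ge) (use \<open>insert a D \<in> I\<close> in auto)
  also have "\<dots> \<le> card D"
    using max_indep_subset_card_ge[OF D_max] Z(2) by (simp add: max_indep_subset_def)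
  finally show False
    using \<open>a \<notin> D\<close> indep_finite[OF \<open>D \<in> I\<close>] by simp
qed

lemma restr_trunc_basis_exchange:
  assumes "basis (restr_trunc I U q) B" "\<Delta> \<in> I" "card \<Delta> \<le> q" "a \<in> (\<Delta> \<inter> U) - B"
  shows "\<exists>b\<in>B - \<Delta>. insert b (\<Delta> - {a}) \<in> I \<and> insert a (B - {b}) \<in> I"
proof -
  have B: "B \<in> I" "B \<subseteq> U" and maximal: "insert a B \<notin> restr_trunc I U q"
    using assms(1,4) unfolding basis_def restr_trunc_def by blast+
  have "insert a (\<Delta> - {a}) \<in> I" "a \<notin> \<Delta> - {a}"
    using assms(2,4) by (simp_all add: insert_absorb)
  show ?thesis
  proof (cases "insert a B \<in> I")
    case True
    moreover have "insert a B \<subseteq> U"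
      using B(2) assms(4) by blast
    ultimately have "q < card (insert a B)"
      using maximal by (simp add: restr_trunc_def)
    moreover have "card (\<Delta> - {a}) < card \<Delta>"
      using card_Diff1_less[OF indep_finite[OF \<open>\<Delta> \<in> I\<close>]] assms(4) by blast
    ultimately have "card (\<Delta> - {a}) < card B"
      using assms(3,4) indep_finite[OF B(1)] by simp
    then obtain b where "b \<in> B - (\<Delta> - {a})" "insert b (\<Delta> - {a}) \<in> I"
      using indep_augment[OF indep_subset[OF \<open>\<Delta> \<in> I\<close> Diff_subset] B(1)] by blast
    moreover have "insert a (B - {b}) \<in> I"
      by (rule indep_subset[OF True]) blast
    ultimately show ?thesis
      using assms(4) by blast
  next
    case False
    then obtain K where K: "K \<subseteq> B" "insert a K \<notin> I" "\<forall>b\<in>K. insert a (B - {b}) \<in> I"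
      using fundamental_circuit B(1) by blast
    then obtain b where "b \<in> K - (\<Delta> - {a})" "insert b (\<Delta> - {a}) \<in> I"
      using augment_by_dependent_insert[OF indep_subset[OF B(1) K(1)] K(2)] \<open>insert a (\<Delta> - {a}) \<in> I\<close>
        \<open>a \<notin> \<Delta> - {a}\<close> by blast
    then show ?thesis
      using K assms(4) by blast
  qed
qed

end

lemma min_basis_exchange_cost:
  assumes "min_basis I c B" "basis I (insert a (B - {b}))" "finite B" "b \<in> B" "a \<notin> B"
  shows "c b \<le> c a"
proof -
  have "(\<Sum>e\<in>B. c e) \<le> (\<Sum>e\<in>insert a (B - {b}). c e)"
    using assms(1,2) unfolding min_basis_def by blast
  also have "\<dots> = c a + (\<Sum>e\<in>B. c e) - c b"
    using assms(3-5) by (simp add: sum_diff1)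
  finally show ?thesis by simp
qed

theorem mainTheorem11:
  fixes E :: "'a set" and I :: "'a set set" and c :: "'a \<Rightarrow> real"
    and U :: "'a set" and q :: nat and B \<Delta> :: "'a set" and a :: 'a
  assumes "matroid E I"
    and "\<forall>e\<in>E. c e \<ge> 0"
    and "U \<subseteq> E"
    and "min_basis (restr_trunc I U q) c B"
    and "\<Delta> \<in> I" and "card \<Delta> \<le> q"
    and "a \<in> (\<Delta> \<inter> U) - B"
  shows "\<exists>b\<in>B - \<Delta>. insert b (\<Delta> - {a}) \<in> I \<and> c b \<le> c a"
proof -
  have basis: "basis (restr_trunc I U q) B"
    using assms(4) unfolding min_basis_def by blast
  obtain b where b: "b \<in> B - \<Delta>" "insert b (\<Delta> - {a}) \<in> I" "insert a (B - {b}) \<in> I"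
    using restr_trunc_basis_exchange[OF assms(1) basis assms(5-7)] by blast
  have M: "matroid U (restr_trunc I U q)"
    using matroid_restr_trunc[OF assms(1,3)] .
  have fin: "finite B"
    using indep_finite[OF M] basis unfolding basis_def by blast
  have card_eq: "card (insert a (B - {b})) = card B"
    using b(1) assms(7) by (intro card_insert_remove fin) auto
  have "insert a (B - {b}) \<in> restr_trunc I U q"
    using basis b(3) assms(7) card_eq unfolding basis_def restr_trunc_def by auto
  then have "basis (restr_trunc I U q) (insert a (B - {b}))"
    using basis_if_card_ge[OF M basis] card_eq by simp
  then have "c b \<le> c a"
    using min_basis_exchange_cost[OF assms(4) _ fin] b(1) assms(7) by blast
  with b show ?thesis by blast
qed

end
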